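(* Let $M$ be a matroid of rank $r$ on a ground set of $n$ elements, and write its Tutte polynomial as $T(M;x,y)=\sum_{i,j} b_{i,j}x^iy^j$. Then $$\sum_{i=0}^{n}\sum_{j=0}^{n-i}(-1)^j\binom{n-i}{j}b_{i,j}=(-1)^{n-r}.$$
   Context: For a matroid $M$ on ground set $E$ with rank function $r$, the Tutte polynomial is $T(M;x,y)=\sum_{A\subseteq E}(x-1)^{r(E)-r(A)}(y-1)^{|A|-r(A)}$; the rank of $M$ is $r(E)$. *)

theory Defs
  imports "HOL-Computational_Algebra.Polynomial"
begin

text \<open>A matroid on a finite ground set E, given by its rank function (rank axioms R1-R3).
  The rank function is only meaningful on subsets of E.\<close>
definition matroid_rank :: "'a set \<Rightarrow> ('a set \<Rightarrow> nat) \<Rightarrow> bool" where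
  "matroid_rank E rk \<longleftrightarrow> finite E
     \<and> (\<forall>A. A \<subseteq> E \<longrightarrow> rk A \<le> card A)
     \<and> (\<forall>A B. A \<subseteq> B \<and> B \<subseteq> E \<longrightarrow> rk A \<le> rk B)
     \<and> (\<forall>A B. A \<subseteq> E \<and> B \<subseteq> E \<longrightarrow> rk (A \<union> B) + rk (A \<inter> B) \<le> rk A + rk B)"

text \<open>Bivariate integer polynomials are represented as polynomials in y whose
  coefficients are polynomials in x: type int poly poly.  The coefficient of
  x^i y^j in P is coeff (coeff P j) i.\<close>
definition tutte :: "'a set \<Rightarrow> ('a set \<Rightarrow> nat) \<Rightarrow> int poly poly" where
  "tutte E rk = (\<Sum>A\<in>Pow E.
      [: [:-1, 1:] ^ (rk E - rk A) :] * [: [:-1:], 1 :] ^ (card A - rk A))"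

definition tutte_coeff :: "'a set \<Rightarrow> ('a set \<Rightarrow> nat) \<Rightarrow> nat \<Rightarrow> nat \<Rightarrow> int" where
  "tutte_coeff E rk i j = coeff (coeff (tutte E rk) j) i"

end

theory Submission
  imports Defs "HOL-Computational_Algebra.Polynomial_FPS"
begin

text \<open>Substitute x := X and y := X / (X - 1) in formal power series. The coefficient of X^n in
  X^i y^j / (1 - X) = (-1)^j X^(i+j) / (1 - X)^(j+1) is (-1)^j binom(n - i, j), so the left-hand
  side is the coefficient of X^n in T(M; X, y) / (1 - X). The point (X, y) lies on the hyperbola
  (x - 1)(y - 1) = 1, on which every term (x - 1)^(r - r(A)) (y - 1)^(|A| - r(A)) of the subset
  expansion equals (x - 1)^r (y - 1)^|A|, so that T = (x - 1)^r y^n there. Hence the sum is the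
  coefficient of X^n in (-1)^n X^n (X - 1)^r / (1 - X)^(n+1), namely (-1)^(n+r).\<close>

lemma sum_Pow_power_card:
  fixes c :: "'b::comm_semiring_1"
  assumes "finite E"
  shows "(\<Sum>A\<in>Pow E. c ^ card A) = (1 + c) ^ card E"
  using prod_add[OF assms, of "\<lambda>_. c" "\<lambda>_. 1"] by (simp add: add.commute)

lemma power_diff_mult_power_diff:
  fixes u w :: "'b::comm_monoid_mult"
  assumes "u * w = 1" "s \<le> r" "s \<le> a"
  shows "u ^ (r - s) * w ^ (a - s) = u ^ r * w ^ a"
proof -
  have "u ^ r * w ^ a = u ^ (r - s + s) * w ^ (a - s + s)"
    using assms(2,3) by simp
  also have "\<dots> = u ^ (r - s) * w ^ (a - s) * (u * w) ^ s"
    by (simp only: power_add power_mult_distrib mult_ac)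
  finally show ?thesis
    using assms(1) by simp
qed

lemma tutte_sum_on_hyperbola:
  fixes u w :: "'b::comm_semiring_1"
  assumes "matroid_rank E rk" "u * w = 1"
  shows "(\<Sum>A\<in>Pow E. u ^ (rk E - rk A) * w ^ (card A - rk A)) = u ^ rk E * (1 + w) ^ card E"
proof -
  have "finite E" and rk_le_card: "\<And>A. A \<subseteq> E \<Longrightarrow> rk A \<le> card A"
    and rk_le_rk: "\<And>A. A \<subseteq> E \<Longrightarrow> rk A \<le> rk E"
    using assms(1) unfolding matroid_rank_def by auto
  have "(\<Sum>A\<in>Pow E. u ^ (rk E - rk A) * w ^ (card A - rk A))
      = (\<Sum>A\<in>Pow E. u ^ rk E * w ^ card A)"
    using assms(2) rk_le_card rk_le_rk by (intro sum.cong refl power_diff_mult_power_diff) auto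
  also have "\<dots> = u ^ rk E * (1 + w) ^ card E"
    by (simp add: sum_Pow_power_card \<open>finite E\<close> flip: sum_distrib_left)
  finally show ?thesis .
qed

unbundle fps_syntax

definition fps_geom :: "int fps" where
  "fps_geom = Abs_fps (\<lambda>_. 1)"

lemma fps_geom_nth [simp]: "fps_geom $ n = 1"
  by (simp add: fps_geom_def)

lemma one_minus_fps_X_mult_geom: "(1 - fps_X) * fps_geom = 1"
  by (rule fps_ext) (simp add: fps_geom_def algebra_simps)

lemma fps_mult_geom_nth: "(f * fps_geom) $ n = (\<Sum>i=0..n. f $ i)"
  by (simp add: fps_mult_nth)

lemma fps_X_power_mult_geom_power_nth:
  "(fps_X ^ j * fps_geom ^ Suc j) $ m = int (m choose j)"
proof (induction j arbitrary: m)
  case 0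
  then show ?case by simp
next
  case (Suc j)
  have "fps_X ^ Suc j * fps_geom ^ Suc (Suc j)
      = (fps_X * (fps_X ^ j * fps_geom ^ Suc j)) * fps_geom"
    by (simp only: power_Suc mult_ac)
  then have "(fps_X ^ Suc j * fps_geom ^ Suc (Suc j)) $ m
      = (\<Sum>k=0..m. if k = 0 then 0 else int ((k - 1) choose j))"
    by (simp only: fps_mult_geom_nth fps_X_mult_nth Suc.IH)
  also have "\<dots> = int (m choose Suc j)"
  proof (cases m)
    case (Suc m')
    then have "(\<Sum>k=0..m. if k = 0 then 0 else int ((k - 1) choose j)) = (\<Sum>k\<le>m'. int (k choose j))"
      unfolding Suc sum.atLeast0_atMost_Suc_shift by (simp add: atLeast0AtMost)
    also have "\<dots> = int (m choose Suc j)"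
      by (simp only: Suc sum_choose_upper flip: of_nat_sum)
    finally show ?thesis .
  qed simp
  finally show ?case .
qed

text \<open>The point \<open>y = X / (X - 1)\<close>, chosen so that \<open>(X - 1)(y - 1) = 1\<close>.\<close>

definition fps_Y :: "int fps" where
  "fps_Y = - fps_X * fps_geom"

lemma fps_Y_minus_one: "fps_Y - 1 = - fps_geom"
proof -
  have "fps_Y - 1 = - fps_X * fps_geom - (1 - fps_X) * fps_geom"
    by (simp add: one_minus_fps_X_mult_geom fps_Y_def)
  then show ?thesis
    by (simp add: algebra_simps)
qed

lemma fps_X_minus_one_mult_fps_Y_minus_one: "(fps_X - 1) * (fps_Y - 1) = 1"
  using one_minus_fps_X_mult_geom by (simp add: fps_Y_minus_one algebra_simps)

lemma fps_Y_power: "fps_Y ^ j = fps_const ((-1) ^ j) * (fps_X ^ j * fps_geom ^ j)"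
proof -
  have "(-1 :: int fps) ^ j = fps_const ((-1) ^ j)"
    by (metis fps_const_1_eq_1 fps_const_neg fps_const_power)
  then show ?thesis
    unfolding fps_Y_def mult_minus_left power_minus[of "fps_X * fps_geom"] power_mult_distrib
    by (simp only:)
qed

lemma fps_Y_power_mult_geom_nth: "(fps_Y ^ j * fps_geom) $ m = (-1) ^ j * int (m choose j)"
proof -
  have "fps_Y ^ j * fps_geom = fps_const ((-1) ^ j) * (fps_X ^ j * fps_geom ^ Suc j)"
    by (simp only: fps_Y_power power_Suc mult_ac)
  then show ?thesis
    by (simp only: fps_mult_left_const_nth fps_X_power_mult_geom_power_nth)
qed

definition fps_of_bipoly :: "int poly poly \<Rightarrow> int fps \<Rightarrow> int fps" where
  "fps_of_bipoly P y = poly (map_poly fps_of_poly P) y"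

lemma map_poly_fps_of_poly_add:
  "map_poly fps_of_poly (P + Q) = map_poly fps_of_poly P + map_poly fps_of_poly Q"
  by (rule poly_eqI) (simp add: coeff_map_poly fps_of_poly_add)

lemma map_poly_fps_of_poly_mult:
  "map_poly fps_of_poly (P * Q) = map_poly fps_of_poly P * map_poly fps_of_poly Q"
  by (rule poly_eqI) (simp add: coeff_map_poly coeff_mult fps_of_poly_sum fps_of_poly_mult)

lemma fps_of_bipoly_sum: "fps_of_bipoly (\<Sum>A\<in>S. P A) y = (\<Sum>A\<in>S. fps_of_bipoly (P A) y)"
proof -
  have "map_poly fps_of_poly (\<Sum>A\<in>S. P A) = (\<Sum>A\<in>S. map_poly fps_of_poly (P A))"
    by (induction S rule: infinite_finite_induct) (simp_all add: map_poly_fps_of_poly_add)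
  then show ?thesis
    by (simp add: fps_of_bipoly_def poly_sum)
qed

lemma fps_of_bipoly_mult: "fps_of_bipoly (P * Q) y = fps_of_bipoly P y * fps_of_bipoly Q y"
  by (simp add: fps_of_bipoly_def map_poly_fps_of_poly_mult)

lemma fps_of_bipoly_power: "fps_of_bipoly (P ^ k) y = fps_of_bipoly P y ^ k"
  by (induction k) (simp_all add: fps_of_bipoly_mult, simp add: fps_of_bipoly_def)

lemma fps_of_bipoly_const: "fps_of_bipoly [:p:] y = fps_of_poly p"
  by (simp add: fps_of_bipoly_def map_poly_pCons)

lemma fps_of_bipoly_linear: "fps_of_bipoly [:p, 1:] y = fps_of_poly p + y"
  by (simp add: fps_of_bipoly_def map_poly_pCons)

lemma fps_of_bipoly_tutte:
  "fps_of_bipoly (tutte E rk) y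
     = (\<Sum>A\<in>Pow E. (fps_X - 1) ^ (rk E - rk A) * (y - 1) ^ (card A - rk A))"
proof -
  have x_minus_one: "fps_of_poly [:-1, 1:] = (fps_X - 1 :: int fps)"
    and y_minus_one: "fps_of_poly [:-1:] + y = y - 1"
    by (simp_all add: fps_of_poly_pCons fps_of_poly_const flip: fps_const_neg)
  show ?thesis
    unfolding tutte_def fps_of_bipoly_sum fps_of_bipoly_mult fps_of_bipoly_power
      fps_of_bipoly_const fps_of_bipoly_linear fps_of_poly_power x_minus_one y_minus_one ..
qed

lemma fps_of_bipoly_eq_sum:
  assumes "degree P \<le> N"
  shows "fps_of_bipoly P y = (\<Sum>j\<le>N. fps_of_poly (coeff P j) * y ^ j)"
proof -
  have "degree (map_poly fps_of_poly P) \<le> N"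
    using map_poly_degree_leq assms by (rule order.trans)
  then have "map_poly fps_of_poly P = (\<Sum>j\<le>N. monom (coeff (map_poly fps_of_poly P) j) j)"
    by (rule poly_as_sum_of_monoms' [symmetric])
  then show ?thesis
    by (simp add: fps_of_bipoly_def poly_sum poly_monom coeff_map_poly)
qed

lemma alternating_binomial_coeff_sum_eq_fps_nth:
  "(\<Sum>i=0..n. \<Sum>j=0..n-i. (-1) ^ j * int ((n - i) choose j) * coeff (coeff P j) i)
     = (fps_of_bipoly P fps_Y * fps_geom) $ n"
proof -
  define N where "N = n + degree P"
  have "(fps_of_bipoly P fps_Y * fps_geom) $ n
      = (\<Sum>j\<le>N. (fps_of_poly (coeff P j) * (fps_Y ^ j * fps_geom)) $ n)"
    by (simp add: fps_of_bipoly_eq_sum[of P N] N_def sum_distrib_right fps_sum_nth mult.assoc)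
  also have "\<dots> = (\<Sum>j\<le>N. \<Sum>i=0..n. (-1) ^ j * int ((n - i) choose j) * coeff (coeff P j) i)"
    by (intro sum.cong refl, subst fps_mult_nth)
      (simp only: fps_of_poly_nth fps_Y_power_mult_geom_nth, simp add: mult_ac)
  also have "\<dots> = (\<Sum>i=0..n. \<Sum>j\<le>N. (-1) ^ j * int ((n - i) choose j) * coeff (coeff P j) i)"
    by (rule sum.swap)
  also have "\<dots> = (\<Sum>i=0..n. \<Sum>j=0..n-i. (-1) ^ j * int ((n - i) choose j) * coeff (coeff P j) i)"
    by (intro sum.cong refl sum.mono_neutral_right) (auto simp: N_def)
  finally show ?thesis ..
qed

lemma fps_X_minus_one_power_mult_Y_power_geom_nth:
  assumes "r \<le> n"
  shows "((fps_X - 1) ^ r * fps_Y ^ n * fps_geom) $ n = (-1) ^ (n - r)"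
proof -
  have factor: "(fps_X - 1) ^ r * fps_Y ^ n * fps_geom
      = fps_X ^ n * (fps_const ((-1) ^ n) * (fps_X - 1) ^ r * fps_geom ^ Suc n)"
    by (simp only: fps_Y_power power_Suc mult_ac)
  have "((fps_X - 1) ^ r * fps_Y ^ n * fps_geom) $ n = (-1) ^ n * (-1) ^ r"
    unfolding factor fps_X_power_mult_nth by (simp add: fps_nth_power_0)
  also have "\<dots> = (-1) ^ (n - r)"
  proof -
    obtain k where "n = r + k"
      using assms le_Suc_ex by blast
    then show ?thesis
      by (simp add: power_add)
  qed
  finally show ?thesis .
qed

theorem corollary5p2:
  fixes E :: "'a set" and rk :: "'a set \<Rightarrow> nat" and n r :: nat
  assumes "matroid_rank E rk"
    and "n = card E" and "r = rk E"
  shows "(\<Sum>i=0..n. \<Sum>j=0..n-i. (-1::int)^j * int ((n-i) choose j) * tutte_coeff E rk i j)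
           = (-1::int)^(n-r)"
proof -
  have "r \<le> n"
    using assms unfolding matroid_rank_def by auto
  have "fps_of_bipoly (tutte E rk) fps_Y = (fps_X - 1) ^ r * fps_Y ^ n"
    unfolding fps_of_bipoly_tutte assms(2,3)
      tutte_sum_on_hyperbola[OF assms(1) fps_X_minus_one_mult_fps_Y_minus_one]
    by simp
  then show ?thesis
    unfolding tutte_coeff_def alternating_binomial_coeff_sum_eq_fps_nth
    using fps_X_minus_one_power_mult_Y_power_geom_nth[OF \<open>r \<le> n\<close>] by simp
qed

end
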